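(* No randomized strategyproof mechanism for locating an obnoxious facility on $[0,1]$ has an approximation ratio better than $\sqrt{6/5}$ for the geometric mean of utilities.
   Context: Agents $i=1,\dots,n$ have private locations $x_i\in[0,1]$. A randomized mechanism $f$ maps each reported profile to a distribution over $[0,1]$; agent $i$'s utility from distribution $\pi$ is $\mathbb E_{y\sim\pi}|x_i-y|$, and $f$ is strategyproof if no agent can increase this expected utility by misreporting. The objective of $y$ is the geometric mean $\big(\prod_i|x_i-y|\big)^{1/n}$, and the mechanism's value is its expectation under $f(\mathbf x)$. The approximation ratio is the supremum over all numbers of agents and profiles of (optimal objective over deterministic $z\in[0,1]$)/(mechanism's value). *)

theory Defs
  imports "HOL-Probability.Probability"
begin

definition profile :: "real list \<Rightarrow> bool" where
  "profile xs \<longleftrightarrow> xs \<noteq> [] \<and> set xs \<subseteq> {0..1}"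

definition mechanism :: "(real list \<Rightarrow> real measure) \<Rightarrow> bool" where
  "mechanism f \<longleftrightarrow> (\<forall>xs. profile xs \<longrightarrow>
     prob_space (f xs) \<and> sets (f xs) = sets borel \<and> (AE y in f xs. y \<in> {0..1}))"

definition exp_utility :: "real measure \<Rightarrow> real \<Rightarrow> real" where
  "exp_utility P a = (\<integral>y. \<bar>a - y\<bar> \<partial>P)"

definition strategyproof :: "(real list \<Rightarrow> real measure) \<Rightarrow> bool" where
  "strategyproof f \<longleftrightarrow> (\<forall>xs i x'. profile xs \<longrightarrow> i < length xs \<longrightarrow> x' \<in> {0..1} \<longrightarrow>
     exp_utility (f (xs[i := x'])) (xs ! i) \<le> exp_utility (f xs) (xs ! i))"

definition geo_mean :: "real list \<Rightarrow> real \<Rightarrow> real" where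
  "geo_mean xs y = root (length xs) (\<Prod>a\<leftarrow>xs. \<bar>a - y\<bar>)"

definition opt :: "real list \<Rightarrow> real" where
  "opt xs = (SUP z\<in>{0..1}. geo_mean xs z)"

definition mech_value :: "(real list \<Rightarrow> real measure) \<Rightarrow> real list \<Rightarrow> real" where
  "mech_value f xs = (\<integral>y. geo_mean xs y \<partial>(f xs))"

text \<open>f achieves approximation ratio (at most) rho: OPT / value <= rho on every profile
  (written multiplicatively, so value 0 with OPT > 0 counts as infinite ratio).
  The approximation ratio of f is the infimum of all such rho.\<close>
definition achieves_ratio :: "(real list \<Rightarrow> real measure) \<Rightarrow> real \<Rightarrow> bool" where
  "achieves_ratio f \<rho> \<longleftrightarrow> (\<forall>xs. profile xs \<longrightarrow> opt xs \<le> \<rho> * mech_value f xs)"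

end

theory Submission
  imports Defs
begin

(* Start from the profile [1/4, 3/4] and let one agent move outward to the nearer endpoint,
   giving [0, 3/4] or [1/4, 1].  Both have optimum 1/2, attained at the far endpoint.  By
   strategyproofness the deviating agent's true expected distance can only drop, and in
   [1/4, 3/4] the two expected distances add up to at most 1.  Pointwise on [0, 1],
   11/2 times the objective of [0, 3/4] is at most 2 plus the distance to 1/4 (tight at the
   optimum y = 1), and symmetrically for [1/4, 1].  So the two mechanism values add up to at
   most (2 + 2 + 1) / (11/2) = 10/11 while the optima add up to 1, whence
   rho >= 11/10 > sqrt (6/5). *)

lemma geo_mean_nonneg: "0 \<le> geo_mean xs y"
  unfolding geo_mean_def by (intro real_root_ge_zero prod_list_nonneg) auto

lemma geo_mean_two: "geo_mean [a, b] y = sqrt (\<bar>a - y\<bar> * \<bar>b - y\<bar>)"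
  by (simp add: geo_mean_def sqrt_def numeral_2_eq_2)

lemma continuous_on_geo_mean: "continuous_on UNIV (geo_mean xs)"
proof -
  have "continuous_on UNIV (\<lambda>y::real. \<Prod>a\<leftarrow>xs. \<bar>a - y\<bar>)"
    by (induction xs) (auto intro!: continuous_on_mult continuous_on_rabs continuous_on_diff)
  then show ?thesis
    unfolding geo_mean_def by (rule continuous_on_real_root)
qed

lemma geo_mean_le_opt:
  assumes "z \<in> {0..1}"
  shows "geo_mean xs z \<le> opt xs"
  unfolding opt_def
proof (rule cSUP_upper[OF assms])
  show "bdd_above (geo_mean xs ` {0..1})"
    by (intro bounded_imp_bdd_above compact_imp_bounded compact_continuous_image
        continuous_on_subset[OF continuous_on_geo_mean]) auto
qed

lemma mech_value_nonneg: "0 \<le> mech_value f xs"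
  unfolding mech_value_def by (intro integral_nonneg_AE) (simp add: geo_mean_nonneg)

lemma mechanism_integrable_continuous:
  fixes g :: "real \<Rightarrow> real"
  assumes "mechanism f" "profile xs" "continuous_on UNIV g"
  shows "integrable (f xs) g"
proof -
  have "prob_space (f xs)" and sets: "sets (f xs) = sets borel" and ae: "AE y in f xs. y \<in> {0..1}"
    using assms(1,2) unfolding mechanism_def by auto
  then interpret prob_space "f xs" by simp
  have "bounded (g ` {0..1})"
    by (intro compact_imp_bounded compact_continuous_image continuous_on_subset[OF assms(3)]) auto
  then obtain B where "\<forall>y\<in>{0..1}. norm (g y) \<le> B"
    unfolding bounded_iff by blast
  with ae have "AE y in f xs. norm (g y) \<le> B"
    by auto
  moreover have "g \<in> borel_measurable (f xs)"
    using borel_measurable_continuous_onI[OF assms(3)] sets by (simp cong: measurable_cong_sets)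
  ultimately show ?thesis
    by (rule integrable_const_bound)
qed

lemma mechanism_integral_le_affine:
  fixes g h :: "real \<Rightarrow> real"
  assumes "mechanism f" "profile xs" "continuous_on UNIV g" "continuous_on UNIV h"
    and "\<And>y. y \<in> {0..1} \<Longrightarrow> g y \<le> c + h y"
  shows "(\<integral>y. g y \<partial>f xs) \<le> c + (\<integral>y. h y \<partial>f xs)"
proof -
  have "prob_space (f xs)" and ae: "AE y in f xs. y \<in> {0..1}"
    using assms(1,2) unfolding mechanism_def by auto
  then interpret prob_space "f xs" by simp
  have int_g: "integrable (f xs) g" and int_h: "integrable (f xs) h"
    using mechanism_integrable_continuous assms(1-4) by blast+
  have "integrable (f xs) (\<lambda>y. c + h y)"
    using int_h by simp
  then have "(\<integral>y. g y \<partial>f xs) \<le> (\<integral>y. c + h y \<partial>f xs)"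
    using ae assms(5) by (intro integral_mono_AE int_g) auto
  also have "\<dots> = c + (\<integral>y. h y \<partial>f xs)"
    using int_h by (simp add: prob_space)
  finally show ?thesis .
qed

lemma exp_utility_add_le:
  assumes "mechanism f" "profile xs" "a \<in> {0..1}" "b \<in> {0..1}"
  shows "exp_utility (f xs) a + exp_utility (f xs) b \<le> max (a + b) (2 - a - b)"
proof -
  have cont: "continuous_on UNIV (\<lambda>y::real. \<bar>c - y\<bar>)" for c
    by (intro continuous_intros)
  have "exp_utility (f xs) a + exp_utility (f xs) b = (\<integral>y. \<bar>a - y\<bar> + \<bar>b - y\<bar> \<partial>f xs)"
    unfolding exp_utility_def
    using mechanism_integrable_continuous[OF assms(1,2) cont] by simp
  also have "\<dots> \<le> max (a + b) (2 - a - b) + (\<integral>y. 0 \<partial>f xs)"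
    using assms by (intro mechanism_integral_le_affine cont continuous_intros) auto
  finally show ?thesis by simp
qed

lemma strategyproof_two_agents:
  assumes "strategyproof f" "a \<in> {0..1}" "b \<in> {0..1}"
  shows strategyproof_left: "a' \<in> {0..1} \<Longrightarrow> exp_utility (f [a', b]) a \<le> exp_utility (f [a, b]) a"
    and strategyproof_right: "b' \<in> {0..1} \<Longrightarrow> exp_utility (f [a, b']) b \<le> exp_utility (f [a, b]) b"
proof -
  have "profile [a, b]"
    using assms(2,3) by (simp add: profile_def)
  then have deviate: "exp_utility (f ([a, b][i := x])) ([a, b] ! i) \<le> exp_utility (f [a, b]) ([a, b] ! i)"
    if "i < length [a, b]" "x \<in> {0..1}" for i x
    using assms(1) that unfolding strategyproof_def by blast
  show "a' \<in> {0..1} \<Longrightarrow> exp_utility (f [a', b]) a \<le> exp_utility (f [a, b]) a"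
    using deviate[of 0 a'] by simp
  show "b' \<in> {0..1} \<Longrightarrow> exp_utility (f [a, b']) b \<le> exp_utility (f [a, b]) b"
    using deviate[of 1 b'] by simp
qed

lemma geo_mean_le_true_utility_left:
  fixes y :: real
  assumes "y \<in> {0..1}"
  shows "11/2 * geo_mean [0, 3/4] y \<le> 2 + \<bar>1/4 - y\<bar>"
proof -
  have "y * \<bar>3/4 - y\<bar> \<le> (2/11 * (2 + \<bar>1/4 - y\<bar>))\<^sup>2"
  proof -
    (* 27/100 and 3/5 are the roots of the quadratic difference of the two sides on the
       first piece, 307/1000 is the vertex of the difference on the middle piece. *)
    consider "y \<le> 1/4" | "1/4 \<le> y" "y \<le> 3/4" | "3/4 \<le> y"
      by linarith
    then show ?thesis
    proof cases
      case 1
      then have "0 \<le> (27/100 - y) * (3/5 - y)" by simp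
      with 1 assms show ?thesis by (simp add: power2_eq_square field_simps)
    next
      case 2
      have "0 \<le> (y - 307/1000)\<^sup>2" by simp
      with 2 show ?thesis by (simp add: power2_eq_square field_simps)
    next
      case 3
      with assms have "0 \<le> (y - 3/4) * (1 - y)" by simp
      with 3 assms show ?thesis by (simp add: power2_eq_square field_simps)
    qed
  qed
  then have "sqrt (y * \<bar>3/4 - y\<bar>) \<le> 2/11 * (2 + \<bar>1/4 - y\<bar>)"
    by (intro real_le_lsqrt) auto
  with assms show ?thesis
    by (simp add: geo_mean_two)
qed

lemma geo_mean_le_true_utility_right:
  fixes y :: real
  assumes "y \<in> {0..1}"
  shows "11/2 * geo_mean [1/4, 1] y \<le> 2 + \<bar>3/4 - y\<bar>"
proof -
  have "geo_mean [1/4, 1] y = geo_mean [0, 3/4] (1 - y)" "\<bar>3/4 - y\<bar> = \<bar>1/4 - (1 - y)\<bar>"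
    by (simp_all add: geo_mean_two abs_minus_commute mult.commute)
  moreover have "1 - y \<in> {0..1}"
    using assms by simp
  ultimately show ?thesis
    using geo_mean_le_true_utility_left[of "1 - y"] by simp
qed

lemma mech_value_le_true_utility_left:
  assumes "mechanism f"
  shows "11/2 * mech_value f [0, 3/4] \<le> 2 + exp_utility (f [0, 3/4]) (1/4)"
  unfolding mech_value_def exp_utility_def integral_mult_right_zero[symmetric]
  using assms geo_mean_le_true_utility_left
  by (intro mechanism_integral_le_affine continuous_intros continuous_on_geo_mean)
    (auto simp: profile_def)

lemma mech_value_le_true_utility_right:
  assumes "mechanism f"
  shows "11/2 * mech_value f [1/4, 1] \<le> 2 + exp_utility (f [1/4, 1]) (3/4)"
  unfolding mech_value_def exp_utility_def integral_mult_right_zero[symmetric]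
  using assms geo_mean_le_true_utility_right
  by (intro mechanism_integral_le_affine continuous_intros continuous_on_geo_mean)
    (auto simp: profile_def)

lemma mech_value_deviation_profiles_le:
  assumes "mechanism f" "strategyproof f"
  shows "mech_value f [0, 3/4] + mech_value f [1/4, 1] \<le> 10/11"
proof -
  have "11/2 * (mech_value f [0, 3/4] + mech_value f [1/4, 1])
      \<le> 4 + exp_utility (f [1/4, 3/4]) (1/4) + exp_utility (f [1/4, 3/4]) (3/4)"
    using mech_value_le_true_utility_left[OF assms(1)] mech_value_le_true_utility_right[OF assms(1)]
      strategyproof_left[OF assms(2), of "1/4" "3/4" 0] strategyproof_right[OF assms(2), of "1/4" "3/4" 1]
    by simp
  also have "\<dots> \<le> 5"
    using exp_utility_add_le[OF assms(1), of "[1/4, 3/4]" "1/4" "3/4"] by (simp add: profile_def)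
  finally show ?thesis
    by simp
qed

theorem theorem9:
  fixes f :: "real list \<Rightarrow> real measure" and \<rho> :: real
  assumes "mechanism f" and "strategyproof f" and "achieves_ratio f \<rho>"
  shows "\<rho> \<ge> sqrt (6/5)"
proof -
  define V where "V = mech_value f [0, 3/4] + mech_value f [1/4, 1]"
  have "1/2 \<le> opt [0, 3/4]" "1/2 \<le> opt [1/4, 1]"
    using geo_mean_le_opt[of 1 "[0, 3/4]"] geo_mean_le_opt[of 0 "[1/4, 1]"]
    by (simp_all add: geo_mean_two real_sqrt_divide)
  moreover have "opt [0, 3/4] \<le> \<rho> * mech_value f [0, 3/4]" "opt [1/4, 1] \<le> \<rho> * mech_value f [1/4, 1]"
    using assms(3) unfolding achieves_ratio_def by (simp_all add: profile_def)
  ultimately have ratio: "1 \<le> \<rho> * V"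
    unfolding V_def distrib_left by linarith
  moreover have "0 \<le> V"
    unfolding V_def by (simp add: mech_value_nonneg)
  ultimately have "0 < \<rho>"
    using mult_nonpos_nonneg[of \<rho> V] by (cases "\<rho> \<le> 0") auto
  moreover have "V \<le> 10/11"
    unfolding V_def using mech_value_deviation_profiles_le[OF assms(1,2)] .
  ultimately have "\<rho> * V \<le> \<rho> * (10/11)"
    by simp
  with ratio have "11/10 \<le> \<rho>"
    by simp
  moreover have "sqrt (6/5) \<le> 11/10"
    by (intro real_le_lsqrt) (simp_all add: power2_eq_square)
  ultimately show ?thesis
    by simp
qed

end
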